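(* (Euler's Formula for Resistance Function II.) Let $\Gamma$ be a metrized graph whose edges $e_i\in E(\Gamma)$ have end points $p_i,q_i$ and lengths $L_i$. For any $s,t\in V(\Gamma)$, $$r(s,t)=\frac14\sum_{e_i\in E(\Gamma)}\frac{1}{L_i}\Big[r(p_i,s)-r(q_i,s)-r(p_i,t)+r(q_i,t)\Big]^2.$$
   Context: A metrized graph $\Gamma$ is a finite connected graph (multiple edges and self-loops allowed) in which each edge is identified with a closed line segment of positive length; $V(\Gamma)$ is a chosen finite vertex set and $E(\Gamma)$ the resulting edge set. $\Gamma$ is regarded as a resistive electric circuit in which each edge is a resistor whose resistance equals its length, and $r(x,y)$ denotes the effective resistance between $x$ and $y$. *)

theory Defs
  imports Complex_Main
begin

text \<open>A metrized graph, presented combinatorially: a finite nonempty vertex set V,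
 a finite set E of edge labels, each edge e having end points p e, q e in V
 (p e = q e allowed: self-loops; several edges may share end points: multiple edges)
 and length L e > 0. The graph is connected.\<close>

definition adj :: "'e set \<Rightarrow> ('e \<Rightarrow> 'v) \<Rightarrow> ('e \<Rightarrow> 'v) \<Rightarrow> ('v \<times> 'v) set" where
  "adj E p q = {(p e, q e) | e. e \<in> E} \<union> {(q e, p e) | e. e \<in> E}"

definition metrized_graph ::
  "'v set \<Rightarrow> 'e set \<Rightarrow> ('e \<Rightarrow> 'v) \<Rightarrow> ('e \<Rightarrow> 'v) \<Rightarrow> ('e \<Rightarrow> real) \<Rightarrow> bool" where
  "metrized_graph V E p q L \<longleftrightarrow>
     finite V \<and> V \<noteq> {} \<and> finite E \<and>
     (\<forall>e\<in>E. p e \<in> V \<and> q e \<in> V \<and> L e > 0) \<and>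
     (\<forall>x\<in>V. \<forall>y\<in>V. (x, y) \<in> (adj E p q)\<^sup>*)"

text \<open>Net current flowing out of vertex x for the potential f, each edge being a
 resistor of resistance L e (Ohm's law); self-loops contribute nothing.\<close>
definition net_current ::
  "'e set \<Rightarrow> ('e \<Rightarrow> 'v) \<Rightarrow> ('e \<Rightarrow> 'v) \<Rightarrow> ('e \<Rightarrow> real) \<Rightarrow> ('v \<Rightarrow> real) \<Rightarrow> 'v \<Rightarrow> real" where
  "net_current E p q L f x =
     (\<Sum>e\<in>{e\<in>E. p e = x}. (f x - f (q e)) / L e) +
     (\<Sum>e\<in>{e\<in>E. q e = x}. (f x - f (p e)) / L e)"

text \<open>Effective resistance r(s,t): inject a unit current at s and extract it at t
 (Kirchhoff's current law at every vertex); r(s,t) is the resulting potential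
 difference f s - f t.\<close>
definition eff_res ::
  "'v set \<Rightarrow> 'e set \<Rightarrow> ('e \<Rightarrow> 'v) \<Rightarrow> ('e \<Rightarrow> 'v) \<Rightarrow> ('e \<Rightarrow> real) \<Rightarrow> 'v \<Rightarrow> 'v \<Rightarrow> real" where
  "eff_res V E p q L s t =
     (THE r. \<exists>f. (\<forall>x\<in>V. net_current E p q L f x =
                      (if x = s then 1 else 0) - (if x = t then 1 else 0))
                \<and> r = f s - f t)"

end

(* Let f be a potential of the unit current from s to t, so that r(s,t) = f s - f t.  Green's
   reciprocity theorem gives r(x,s) - r(x,t) = f s + f t - 2 f x for every vertex x, so the bracket
   belonging to the edge e is -2 (f (p e) - f (q e)) and the right-hand side is the energy
   sum_e (f (p e) - f (q e))^2 / L e of f.  Summation by parts turns the energy into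
   sum_x f x * (net current of f at x) = f s - f t. *)

theory Submission
  imports Defs "HOL-Library.Function_Algebras"
begin

lemma (in vector_space) linear_inj_on_subspace_imp_surj_on:
  assumes lin: "Vector_Spaces.linear scale scale T"
    and S: "subspace S" "S \<subseteq> span B" "finite B"
    and maps: "T ` S \<subseteq> S" and inj: "inj_on T S"
  shows "T ` S = S"
proof
  interpret T: Vector_Spaces.linear scale scale T by (rule lin)
  obtain C where C: "C \<subseteq> S" "independent C" "S \<subseteq> span C"
    by (rule basis_exists)
  have span_C: "span C = S"
    using C(1,3) S(1) by (rule span_subspace)
  have "C \<subseteq> span B" using C(1) S(2) by (rule order_trans)
  then have "finite C"
    using independent_span_bound[OF S(3) C(2)] by simp
  have indep_TC: "independent (T ` C)"
    using T.independent_injective_image[OF C(2)] inj span_C by simp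
  have card_TC: "card (T ` C) = card C"
    using card_image inj_on_subset[OF inj C(1)] by blast
  show "S \<subseteq> T ` S"
  proof
    fix y assume "y \<in> S"
    show "y \<in> T ` S"
    proof (rule ccontr)
      assume "y \<notin> T ` S"
      then have y: "y \<notin> span (T ` C)"
        using T.span_image span_C by simp
      have "insert y (T ` C) \<subseteq> span C"
        using \<open>y \<in> S\<close> maps span_C C(1) by auto
      then have "card (insert y (T ` C)) \<le> card C"
        using independent_span_bound[OF \<open>finite C\<close> independent_insertI[OF y indep_TC]] by simp
      moreover have "y \<notin> T ` C"
        using y span_base by blast
      ultimately show False
        using card_TC \<open>finite C\<close> by simp
    qed
  qed
qed (rule maps)

interpretation fun_space: vector_space "\<lambda>c (f :: 'a \<Rightarrow> real) x. c * f x"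
  by unfold_locales (auto simp: algebra_simps)

lemma sum_fun_apply: "(\<Sum>i\<in>A. F i) x = (\<Sum>i\<in>A. F i x)"
  by (induct A rule: infinite_finite_induct) auto

lemma supported_fun_in_span_indicators:
  assumes "finite V" and "\<forall>x. x \<notin> V \<longrightarrow> f x = 0"
  shows "f \<in> fun_space.span ((\<lambda>v x. if x = v then 1 else 0) ` V)"
proof -
  have "f = (\<Sum>v\<in>V. (\<lambda>x. f v * (if x = v then 1 else 0)))"
    using assms by (auto simp: sum_fun_apply if_distrib cong: if_cong)
  also have "\<dots> \<in> fun_space.span ((\<lambda>v x. if x = v then 1 else 0) ` V)"
    by (intro fun_space.span_sum fun_space.span_scale fun_space.span_base) auto
  finally show ?thesis .
qed

definition dipole :: "'v \<Rightarrow> 'v \<Rightarrow> 'v \<Rightarrow> real" where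
  "dipole s t x = (if x = s then 1 else 0) - (if x = t then 1 else 0)"

definition unit_current_potential ::
  "'v set \<Rightarrow> 'e set \<Rightarrow> ('e \<Rightarrow> 'v) \<Rightarrow> ('e \<Rightarrow> 'v) \<Rightarrow> ('e \<Rightarrow> real) \<Rightarrow> 'v \<Rightarrow> 'v \<Rightarrow> ('v \<Rightarrow> real) \<Rightarrow> bool"
  where "unit_current_potential V E p q L s t f \<longleftrightarrow> (\<forall>x\<in>V. net_current E p q L f x = dipole s t x)"

lemma metrized_graphD:
  assumes "metrized_graph V E p q L"
  shows "finite V" "V \<noteq> {}" "finite E" "p ` E \<subseteq> V" "q ` E \<subseteq> V" "\<And>e. e \<in> E \<Longrightarrow> L e > 0"
    "\<And>x y. x \<in> V \<Longrightarrow> y \<in> V \<Longrightarrow> (x, y) \<in> (adj E p q)\<^sup>*"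
  using assms unfolding metrized_graph_def by auto

lemma net_current_add:
  "net_current E p q L (\<lambda>z. f z + g z) x = net_current E p q L f x + net_current E p q L g x"
  unfolding net_current_def by (simp add: add_diff_add add_divide_distrib sum.distrib)

lemma net_current_diff:
  "net_current E p q L (\<lambda>z. f z - g z) x = net_current E p q L f x - net_current E p q L g x"
  unfolding net_current_def by (simp add: sum_subtractf diff_divide_distrib)

lemma net_current_cmult:
  "net_current E p q L (\<lambda>z. c * f z) x = c * net_current E p q L f x"
  unfolding net_current_def by (simp add: sum_distrib_left right_diff_distrib distrib_left)

lemma sum_mult_sum_incident:
  fixes g :: "'v \<Rightarrow> 'a::semiring_0"
  assumes "finite V" "finite E" "p ` E \<subseteq> V"
  shows "(\<Sum>x\<in>V. g x * (\<Sum>e\<in>{e\<in>E. p e = x}. h x e)) = (\<Sum>e\<in>E. g (p e) * h (p e) e)"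
proof -
  have "(\<Sum>x\<in>V. g x * (\<Sum>e\<in>{e\<in>E. p e = x}. h x e))
      = (\<Sum>x\<in>V. \<Sum>e\<in>{e\<in>E. p e = x}. g (p e) * h (p e) e)"
    unfolding sum_distrib_left by (rule sum.cong) auto
  also have "\<dots> = (\<Sum>e\<in>E. g (p e) * h (p e) e)"
    using assms by (intro sum.group) auto
  finally show ?thesis .
qed

lemma sum_mult_net_current:
  assumes "finite V" "finite E" "p ` E \<subseteq> V" "q ` E \<subseteq> V"
  shows "(\<Sum>x\<in>V. g x * net_current E p q L f x)
    = (\<Sum>e\<in>E. (g (p e) - g (q e)) * (f (p e) - f (q e)) / L e)"
proof -
  have "(\<Sum>x\<in>V. g x * net_current E p q L f x)
      = (\<Sum>e\<in>E. g (p e) * ((f (p e) - f (q e)) / L e)) + (\<Sum>e\<in>E. g (q e) * ((f (q e) - f (p e)) / L e))"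
    unfolding net_current_def distrib_left sum.distrib
      sum_mult_sum_incident[OF assms(1,2,3), of g "\<lambda>x e. (f x - f (q e)) / L e"]
      sum_mult_sum_incident[OF assms(1,2,4), of g "\<lambda>x e. (f x - f (p e)) / L e"] ..
  also have "\<dots> = (\<Sum>e\<in>E. (g (p e) - g (q e)) * (f (p e) - f (q e)) / L e)"
    unfolding sum.distrib[symmetric]
    by (intro sum.cong refl) (simp add: add_divide_distrib[symmetric] algebra_simps)
  finally show ?thesis .
qed

lemma sum_net_current_eq_0:
  assumes "finite V" "finite E" "p ` E \<subseteq> V" "q ` E \<subseteq> V"
  shows "(\<Sum>x\<in>V. net_current E p q L f x) = 0"
  using sum_mult_net_current[OF assms, of "\<lambda>_. 1"] by simp

lemma sum_mult_dipole:
  assumes "finite V" "s \<in> V" "t \<in> V"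
  shows "(\<Sum>x\<in>V. h x * dipole s t x) = h s - h t"
proof -
  have "h x * dipole s t x = (if x = s then h s else 0) - (if x = t then h t else 0)" for x
    by (simp add: dipole_def)
  then show ?thesis
    using assms by (simp add: sum_subtractf)
qed

lemma unit_current_potential_reciprocity:
  assumes "finite V" "finite E" "p ` E \<subseteq> V" "q ` E \<subseteq> V" "a \<in> V" "b \<in> V" "c \<in> V" "d \<in> V"
    and "unit_current_potential V E p q L a b u" "unit_current_potential V E p q L c d v"
  shows "u c - u d = v a - v b"
proof -
  have "u c - u d = (\<Sum>x\<in>V. u x * net_current E p q L v x)"
    using assms by (simp add: unit_current_potential_def sum_mult_dipole)
  also have "\<dots> = (\<Sum>x\<in>V. v x * net_current E p q L u x)"
    unfolding sum_mult_net_current[OF assms(1-4)] by (simp add: mult.commute)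
  also have "\<dots> = v a - v b"
    using assms by (simp add: unit_current_potential_def sum_mult_dipole)
  finally show ?thesis .
qed

lemma net_current_eq_0_imp_constant:
  assumes G: "metrized_graph V E p q L" and harmonic: "\<forall>x\<in>V. net_current E p q L f x = 0"
    and "x \<in> V" "y \<in> V"
  shows "f x = f y"
proof -
  note G' = metrized_graphD[OF G]
  have energy: "(\<Sum>e\<in>E. (f (p e) - f (q e))\<^sup>2 / L e) = 0"
    using sum_mult_net_current[OF G'(1,3,4,5), of f L f] harmonic by (simp add: power2_eq_square)
  have nonneg: "0 \<le> (f (p e) - f (q e))\<^sup>2 / L e" if "e \<in> E" for e
    using G'(6)[OF that] by simp
  have edge: "f (p e) = f (q e)" if "e \<in> E" for e
  proof -
    have "(f (p e) - f (q e))\<^sup>2 / L e = 0"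
      using energy sum_nonneg_eq_0_iff[OF G'(3) nonneg] that by simp
    then show ?thesis
      using G'(6)[OF that] by simp
  qed
  have "(x, y) \<in> (adj E p q)\<^sup>*"
    using G'(7) assms by blast
  then show ?thesis
    by induction (auto simp: adj_def edge)
qed

lemma net_current_solvable:
  assumes G: "metrized_graph V E p q L" and balanced: "(\<Sum>x\<in>V. b x) = 0"
  shows "\<exists>f. \<forall>x\<in>V. net_current E p q L f x = b x"
proof -
  note G' = metrized_graphD[OF G]
  obtain t0 where "t0 \<in> V"
    using G'(2) by blast
  \<comment> \<open>Grounding at t0 makes the Laplacian injective on functions supported on V.\<close>
  define T where "T f x = (if x \<in> V then net_current E p q L f x + (if x = t0 then f t0 else 0) else 0)"
    for f :: "'a \<Rightarrow> real" and x
  define S where "S = {f :: 'a \<Rightarrow> real. \<forall>x. x \<notin> V \<longrightarrow> f x = 0}"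
  have T_add: "T (f + g) = T f + T g" for f g
    by (simp add: T_def fun_eq_iff plus_fun_def net_current_add)
  have T_scale: "T (\<lambda>x. c * f x) = (\<lambda>x. c * T f x)" for c f
    by (simp add: T_def fun_eq_iff net_current_cmult distrib_left)
  interpret T: Vector_Spaces.linear "\<lambda>c f x. c * f x" "\<lambda>c f x. c * f x" T
    using T_add T_scale
    by (simp add: Vector_Spaces.linear_iff fun_space.vector_space_axioms)
  have sum_T: "(\<Sum>x\<in>V. T f x) = f t0" for f
    using \<open>t0 \<in> V\<close> G'(1) sum_net_current_eq_0[OF G'(1,3,4,5)] by (simp add: T_def sum.distrib)
  have grounded: "\<forall>x\<in>V. net_current E p q L f x = T f x" if "f t0 = 0" for f
    using that by (simp add: T_def)
  have "fun_space.subspace S"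
    by (auto simp: fun_space.subspace_def S_def)
  moreover have "inj_on T S"
  proof (rule T.inj_on_iff_eq_0[THEN iffD2, OF \<open>fun_space.subspace S\<close>], intro ballI impI)
    fix f assume "f \<in> S" "T f = 0"
    then have "f t0 = 0"
      using sum_T[of f] by simp
    then have "\<forall>x\<in>V. net_current E p q L f x = 0"
      using grounded[of f] \<open>T f = 0\<close> by simp
    then have "\<forall>x\<in>V. f x = f t0"
      using net_current_eq_0_imp_constant[OF G] \<open>t0 \<in> V\<close> by blast
    then show "f = 0"
      using \<open>f \<in> S\<close> \<open>f t0 = 0\<close> by (auto simp: S_def fun_eq_iff)
  qed
  ultimately have "T ` S = S"
    using supported_fun_in_span_indicators[OF G'(1)] G'(1)
    by (intro fun_space.linear_inj_on_subspace_imp_surj_on[OF T.linear_axioms])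
      (auto simp: S_def T_def)
  moreover have "(\<lambda>x. if x \<in> V then b x else 0) \<in> S"
    by (simp add: S_def)
  ultimately obtain f where Tf: "T f = (\<lambda>x. if x \<in> V then b x else 0)"
    by (metis imageE)
  then have "f t0 = 0"
    using sum_T[of f] balanced by simp
  then show ?thesis
    using grounded[of f] Tf by auto
qed

lemma unit_current_potential_exists:
  assumes "metrized_graph V E p q L" "s \<in> V" "t \<in> V"
  shows "\<exists>f. unit_current_potential V E p q L s t f"
  unfolding unit_current_potential_def
  using assms sum_mult_dipole[OF metrized_graphD(1)[OF assms(1)] assms(2,3), of "\<lambda>_. 1"]
  by (intro net_current_solvable) simp_all

lemma eff_res_eq:
  assumes G: "metrized_graph V E p q L" and "s \<in> V" "t \<in> V"
    and f: "unit_current_potential V E p q L s t f"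
  shows "eff_res V E p q L s t = f s - f t"
proof -
  have "eff_res V E p q L s t = (THE r. \<exists>g. unit_current_potential V E p q L s t g \<and> r = g s - g t)"
    by (simp add: eff_res_def unit_current_potential_def dipole_def)
  also have "\<dots> = f s - f t"
  proof (rule the_equality)
    fix r assume "\<exists>g. unit_current_potential V E p q L s t g \<and> r = g s - g t"
    then obtain g where g: "unit_current_potential V E p q L s t g" and r: "r = g s - g t"
      by blast
    have "\<forall>x\<in>V. net_current E p q L (\<lambda>z. g z - f z) x = 0"
      using f g by (simp add: unit_current_potential_def net_current_diff)
    then have "g s - f s = g t - f t"
      by (rule net_current_eq_0_imp_constant[OF G _ \<open>s \<in> V\<close> \<open>t \<in> V\<close>])
    then show "r = f s - f t"
      using r by simp
  qed (use f in blast)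
  finally show ?thesis .
qed

lemma eff_res_diff_eq:
  assumes G: "metrized_graph V E p q L" and s: "s \<in> V" and t: "t \<in> V"
    and f: "unit_current_potential V E p q L s t f" and x: "x \<in> V"
  shows "eff_res V E p q L x s - eff_res V E p q L x t = f s + f t - 2 * f x"
proof -
  note G' = metrized_graphD[OF G]
  obtain u where u: "unit_current_potential V E p q L x s u"
    using unit_current_potential_exists[OF G x s] by blast
  obtain w where w: "unit_current_potential V E p q L x t w"
    using unit_current_potential_exists[OF G x t] by blast
  have "\<forall>z\<in>V. net_current E p q L (\<lambda>z. u z - w z + f z) z = 0"
    using u w f by (simp add: unit_current_potential_def dipole_def net_current_add net_current_diff)
  then have "u x - w x + f x = u t - w t + f t"
    by (rule net_current_eq_0_imp_constant[OF G _ x t])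
  moreover have "u s - u t = f x - f s"
    by (rule unit_current_potential_reciprocity[OF G'(1,3,4,5) x s s t u f])
  ultimately show ?thesis
    using eff_res_eq[OF G x s u] eff_res_eq[OF G x t w] by simp
qed

theorem theorem3p9:
  fixes V :: "'v set" and E :: "'e set" and p q :: "'e \<Rightarrow> 'v" and L :: "'e \<Rightarrow> real"
  assumes "metrized_graph V E p q L" and "s \<in> V" and "t \<in> V"
  shows "eff_res V E p q L s t =
    1/4 * (\<Sum>e\<in>E. (1 / L e) *
      (eff_res V E p q L (p e) s - eff_res V E p q L (q e) s
       - eff_res V E p q L (p e) t + eff_res V E p q L (q e) t)^2)"
proof -
  note G' = metrized_graphD[OF assms(1)]
  obtain f where f: "unit_current_potential V E p q L s t f"
    using unit_current_potential_exists[OF assms] by blast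
  have bracket: "eff_res V E p q L (p e) s - eff_res V E p q L (q e) s
       - eff_res V E p q L (p e) t + eff_res V E p q L (q e) t = - 2 * (f (p e) - f (q e))"
    if "e \<in> E" for e
  proof -
    have "p e \<in> V" "q e \<in> V"
      using G'(4,5) that by auto
    then show ?thesis
      using eff_res_diff_eq[OF assms f \<open>p e \<in> V\<close>] eff_res_diff_eq[OF assms f \<open>q e \<in> V\<close>] by simp
  qed
  have "eff_res V E p q L s t = f s - f t"
    by (rule eff_res_eq[OF assms f])
  also have "\<dots> = (\<Sum>x\<in>V. f x * net_current E p q L f x)"
    using f sum_mult_dipole[OF G'(1) assms(2,3)] by (simp add: unit_current_potential_def)
  also have "\<dots> = (\<Sum>e\<in>E. (f (p e) - f (q e)) * (f (p e) - f (q e)) / L e)"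
    by (rule sum_mult_net_current[OF G'(1,3,4,5)])
  also have "\<dots> = 1/4 * (\<Sum>e\<in>E. (1 / L e) *
      (eff_res V E p q L (p e) s - eff_res V E p q L (q e) s
       - eff_res V E p q L (p e) t + eff_res V E p q L (q e) t)^2)"
    unfolding sum_distrib_left
    by (intro sum.cong refl) (simp only: bracket power_mult_distrib, simp add: power2_eq_square)
  finally show ?thesis .
qed

end
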